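(* Let $f:\mathbb{R}^n\to\mathbb{R}$ be differentiable, let $g:\mathbb{R}^n\to\mathbb{R}\cup\{+\infty\}$ be proper and convex, $F=f+g$, $F^*=\inf F>-\infty$. For $L>0$ and $p\in\{1,2\}$ and $x\in\mathrm{dom}\,g$ set \[ \mathcal{D}_p(x,L)=-2L\min_{y}\Big\{\nabla f(x)^\top(y-x)+\tfrac{L}{2}\|y-x\|_p^2+g(y)-g(x)\Big\}. \] Let $L_1,L_2>0$ satisfy $L_2/n\le L_1\le L_2$. (i) If $\mu_2>0$ satisfies $\frac12\mathcal{D}_2(x,L_2)\ge\mu_2(F(x)-F^* )$ for all $x\in\mathrm{dom}\,g$, then $\frac12\mathcal{D}_1(x,L_1)\ge\frac{\mu_2}{n}(F(x)-F^* )$ for all $x\in\mathrm{dom}\,g$. (ii) If $\mu_1>0$ satisfies $\frac12\mathcal{D}_1(x,L_1)\ge\mu_1(F(x)-F^* )$ for all $x\in\mathrm{dom}\,g$, then $\frac12\mathcal{D}_2(x,L_2)\ge\mu_1(F(x)-F^* )$ for all $x\in\mathrm{dom}\,g$. Thus the best proximal-PL constants satisfy $\mu_2/n\le\mu_1\le\mu_2$.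
   Context: The inequality $\frac12\mathcal{D}_p(x,L)\ge\mu(F(x)-F^* )$ for all feasible $x$ is the proximal-PL condition in the $p$-norm with constants $L,\mu$; constraints (such as $\sum_m x_m=\gamma$ or bounds) are encoded in $g$ as an indicator function. *)

theory Defs
  imports "HOL-Analysis.Analysis" "HOL-Library.Extended_Real"
begin

definition dom_e :: "('a \<Rightarrow> ereal) \<Rightarrow> 'a set" where
  "dom_e g = {x. g x < \<infinity>}"

definition proper_fun :: "('a \<Rightarrow> ereal) \<Rightarrow> bool" where
  "proper_fun g \<longleftrightarrow> (\<forall>x. g x \<noteq> -\<infinity>) \<and> (\<exists>x. g x < \<infinity>)"

definition convex_ereal :: "('a::real_vector \<Rightarrow> ereal) \<Rightarrow> bool" where
  "convex_ereal g \<longleftrightarrow> (\<forall>x y. \<forall>t::real. 0 \<le> t \<and> t \<le> 1 \<longrightarrow>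
      g ((1 - t) *\<^sub>R x + t *\<^sub>R y) \<le> ereal (1 - t) * g x + ereal t * g y)"

definition pnorm :: "nat \<Rightarrow> real ^ 'n \<Rightarrow> real" where
  "pnorm p v = (if p = 1 then (\<Sum>i\<in>UNIV. \<bar>v $ i\<bar>) else norm v)"

definition Dp :: "(real ^ 'n \<Rightarrow> real ^ 'n) \<Rightarrow> (real ^ 'n \<Rightarrow> ereal) \<Rightarrow> nat
                   \<Rightarrow> real ^ 'n \<Rightarrow> real \<Rightarrow> ereal" where
  "Dp gradf g p x L = - ereal (2 * L) *
     (INF y. ereal (gradf x \<bullet> (y - x) + L / 2 * (pnorm p (y - x))\<^sup>2) + g y - g x)"

end

theory Submission
  imports Defs
begin

text \<open>Both comparisons come from one rescaling trick. Given any competitor \<open>y\<close> in the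
  proximal minimisation with one penalty, the point \<open>y' = x + t (y - x)\<close> on the segment
  from \<open>x\<close> to \<open>y\<close> is a competitor for the other penalty: the linear term scales by \<open>t\<close>,
  the quadratic term by \<open>t\<^sup>2\<close>, and convexity of \<open>g\<close> bounds \<open>g y' - g x\<close> by \<open>t (g y - g x)\<close>.
  Choosing \<open>t = L\<^sub>1 / L\<^sub>2\<close> and using \<open>\<parallel>d\<parallel>\<^sub>2 \<le> \<parallel>d\<parallel>\<^sub>1\<close> gives \<open>\<D>\<^sub>1(x,L\<^sub>1) \<le> \<D>\<^sub>2(x,L\<^sub>2)\<close>;
  choosing \<open>t = L\<^sub>2 / (n L\<^sub>1)\<close> and using \<open>\<parallel>d\<parallel>\<^sub>1\<^sup>2 \<le> n \<parallel>d\<parallel>\<^sub>2\<^sup>2\<close> gives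
  \<open>\<D>\<^sub>2(x,L\<^sub>2) \<le> n \<D>\<^sub>1(x,L\<^sub>1)\<close>. The proximal-PL inequalities then transfer directly.\<close>

lemma ereal_INF_cmult:
  fixes B :: "'a \<Rightarrow> ereal"
  assumes "c > 0"
  shows "ereal c * (INF y. B y) = (INF y. ereal c * B y)"
proof -
  have "(INF y. ereal c * B y) = Inf {ereal c * b |b. b \<in> range B}"
    by (rule arg_cong[where f = Inf]) auto
  also have "\<dots> = ereal c * Inf {b. b \<in> range B}"
    by (rule ereal_Inf_cmult[OF assms])
  finally show ?thesis by simp
qed

lemma pnorm_scaleR: "t \<ge> 0 \<Longrightarrow> pnorm p (t *\<^sub>R d) = t * pnorm p d"
  by (auto simp: pnorm_def sum_distrib_left abs_mult)

lemma pnorm_2_le_pnorm_1: "pnorm 2 d \<le> pnorm 1 d"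
  by (simp add: pnorm_def norm_le_l1_cart)

lemma pnorm_1_sq_le_card_pnorm_2_sq:
  "(pnorm 1 d)\<^sup>2 \<le> real CARD('n) * (pnorm 2 (d :: real ^ 'n))\<^sup>2"
proof -
  have "(pnorm 2 d)\<^sup>2 = d \<bullet> d"
    by (simp add: pnorm_def power2_norm_eq_inner)
  also have "\<dots> = (\<Sum>i\<in>UNIV. \<bar>d $ i\<bar>\<^sup>2)"
    by (simp add: inner_vec_def power2_eq_square)
  finally have "(pnorm 2 d)\<^sup>2 = (\<Sum>i\<in>UNIV. \<bar>d $ i\<bar>\<^sup>2)" .
  moreover have "(\<Sum>i\<in>UNIV. \<bar>d $ i\<bar>)\<^sup>2 \<le> (\<Sum>i\<in>UNIV. \<bar>d $ i\<bar>\<^sup>2) * card (UNIV :: 'n set)"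
    by (rule sum_squared_le_sum_of_squares)
  ultimately show ?thesis
    by (simp add: pnorm_def mult.commute)
qed

definition prox_inf :: "'a::real_inner \<Rightarrow> ('a \<Rightarrow> real) \<Rightarrow> ('a \<Rightarrow> ereal) \<Rightarrow> 'a \<Rightarrow> ereal" where
  "prox_inf v P g x = (INF y. ereal (v \<bullet> (y - x) + P (y - x)) + g y - g x)"

lemma Dp_eq_prox_inf:
  "Dp gradf g p x L = - (ereal 2 * (ereal L * prox_inf (gradf x) (\<lambda>d. L / 2 * (pnorm p d)\<^sup>2) g x))"
  unfolding Dp_def prox_inf_def by (simp add: times_ereal.simps(1)[symmetric] mult.assoc del: times_ereal.simps(1))

lemma prox_inf_rescale:
  fixes g :: "'a::real_inner \<Rightarrow> ereal"
  assumes x: "x \<in> dom_e g" and proper: "proper_fun g" and convex: "convex_ereal g"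
    and \<alpha>: "\<alpha> > 0" and \<beta>: "\<beta> > 0" and \<beta>_le_\<alpha>: "\<beta> \<le> \<alpha>"
    and penalty: "\<And>d. \<alpha> * P ((\<beta> / \<alpha>) *\<^sub>R d) \<le> \<beta> * Q d"
  shows "ereal \<alpha> * prox_inf v P g x \<le> ereal \<beta> * prox_inf v Q g x"
proof -
  define t where "t = \<beta> / \<alpha>"
  have t: "0 \<le> t" "t \<le> 1" "\<alpha> * t = \<beta>"
    using \<alpha> \<beta> \<beta>_le_\<alpha> by (auto simp: t_def)
  have not_MInf: "g y \<noteq> -\<infinity>" for y
    using proper by (simp add: proper_fun_def)
  obtain c where gx: "g x = ereal c"
    using x not_MInf[of x] by (cases "g x") (auto simp: dom_e_def)
  have "ereal \<alpha> * prox_inf v P g x \<le> ereal \<beta> * (ereal (v \<bullet> (y - x) + Q (y - x)) + g y - g x)" for y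
  proof (cases "g y")
    case PInf
    then show ?thesis using gx \<beta> by simp
  next
    case MInf
    then show ?thesis using not_MInf by simp
  next
    case (real b)
    define y' where "y' = (1 - t) *\<^sub>R x + t *\<^sub>R y"
    have "g y' \<le> ereal (1 - t) * g x + ereal t * g y"
      using convex t unfolding convex_ereal_def y'_def by auto
    then obtain b' where gy': "g y' = ereal b'" and b': "b' \<le> (1 - t) * c + t * b"
      using gx real not_MInf[of y'] by (cases "g y'") auto
    have y'_x: "y' - x = t *\<^sub>R (y - x)"
      by (simp add: y'_def algebra_simps)
    have "ereal \<alpha> * prox_inf v P g x \<le> ereal \<alpha> * (ereal (v \<bullet> (y' - x) + P (y' - x)) + g y' - g x)"
      unfolding prox_inf_def using \<alpha> by (intro ereal_mult_left_mono INF_lower) auto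
    also have "\<dots> = ereal (\<alpha> * t * (v \<bullet> (y - x)) + \<alpha> * P (t *\<^sub>R (y - x)) + \<alpha> * (b' - c))"
      unfolding y'_x using gy' gx by (simp add: inner_scaleR_right algebra_simps)
    also have "\<dots> \<le> ereal (\<beta> * (v \<bullet> (y - x)) + \<beta> * Q (y - x) + \<beta> * (b - c))"
    proof -
      have "\<alpha> * (b' - c) \<le> \<alpha> * (t * (b - c))"
        using b' \<alpha> by (intro mult_left_mono) (auto simp: algebra_simps)
      moreover have "\<alpha> * P (t *\<^sub>R (y - x)) \<le> \<beta> * Q (y - x)"
        using penalty[of "y - x"] by (simp add: t_def)
      ultimately show ?thesis
        using t(3) by (simp add: mult.assoc[symmetric])
    qed
    also have "\<dots> = ereal \<beta> * (ereal (v \<bullet> (y - x) + Q (y - x)) + g y - g x)"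
      using real gx by (simp add: algebra_simps)
    finally show ?thesis .
  qed
  then have "ereal \<alpha> * prox_inf v P g x \<le> (INF y. ereal \<beta> * (ereal (v \<bullet> (y - x) + Q (y - x)) + g y - g x))"
    by (rule INF_greatest)
  then show ?thesis
    by (simp add: prox_inf_def ereal_INF_cmult \<beta>)
qed

lemma Dp_1_le_Dp_2:
  assumes "x \<in> dom_e g" "proper_fun g" "convex_ereal g" "0 < L1" "L1 \<le> L2"
  shows "Dp gradf g 1 x L1 \<le> Dp gradf g 2 x L2"
proof -
  have "L2 * (L2 / 2 * (pnorm 2 ((L1 / L2) *\<^sub>R d))\<^sup>2) \<le> L1 * (L1 / 2 * (pnorm 1 d)\<^sup>2)" for d
  proof -
    have "L2 * (L2 / 2 * (pnorm 2 ((L1 / L2) *\<^sub>R d))\<^sup>2) = L1 * L1 / 2 * (pnorm 2 d)\<^sup>2"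
      using assms by (simp add: pnorm_scaleR power_mult_distrib field_simps power2_eq_square)
    also have "\<dots> \<le> L1 * L1 / 2 * (pnorm 1 d)\<^sup>2"
      using pnorm_2_le_pnorm_1[of d] assms
      by (intro mult_left_mono power_mono) (auto simp: pnorm_def)
    finally show ?thesis by simp
  qed
  then have "ereal L2 * prox_inf (gradf x) (\<lambda>d. L2 / 2 * (pnorm 2 d)\<^sup>2) g x
           \<le> ereal L1 * prox_inf (gradf x) (\<lambda>d. L1 / 2 * (pnorm 1 d)\<^sup>2) g x"
    using assms by (intro prox_inf_rescale) auto
  then show ?thesis
    unfolding Dp_eq_prox_inf by (simp add: ereal_mult_left_mono)
qed

lemma Dp_2_le_card_Dp_1:
  fixes gradf :: "real ^ 'n \<Rightarrow> real ^ 'n"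
  assumes "x \<in> dom_e g" "proper_fun g" "convex_ereal g" "0 < L1" "0 < L2"
    and "L2 / real CARD('n) \<le> L1"
  shows "Dp gradf g 2 x L2 \<le> ereal (real CARD('n)) * Dp gradf g 1 x L1"
proof -
  define n where "n = real CARD('n)"
  have n: "n > 0" by (simp add: n_def)
  let ?I1 = "prox_inf (gradf x) (\<lambda>d. L1 / 2 * (pnorm 1 d)\<^sup>2) g x"
  let ?I2 = "prox_inf (gradf x) (\<lambda>d. L2 / 2 * (pnorm 2 d)\<^sup>2) g x"
  have "n * L1 * (L1 / 2 * (pnorm 1 ((L2 / (n * L1)) *\<^sub>R d))\<^sup>2) \<le> L2 * (L2 / 2 * (pnorm 2 d)\<^sup>2)"
    for d :: "real ^ 'n"
  proof -
    have "n * L1 * (L1 / 2 * (pnorm 1 ((L2 / (n * L1)) *\<^sub>R d))\<^sup>2) = L2 * L2 / 2 * ((pnorm 1 d)\<^sup>2 / n)"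
      using n assms by (simp add: pnorm_scaleR power_mult_distrib field_simps power2_eq_square)
    also have "\<dots> \<le> L2 * L2 / 2 * (pnorm 2 d)\<^sup>2"
      using pnorm_1_sq_le_card_pnorm_2_sq[of d] n assms
      by (intro mult_left_mono) (auto simp: n_def field_simps)
    finally show ?thesis by simp
  qed
  moreover have "L2 \<le> n * L1"
    using assms n by (simp add: n_def field_simps)
  ultimately have "ereal (n * L1) * ?I1 \<le> ereal L2 * ?I2"
    using assms n by (intro prox_inf_rescale) auto
  moreover have "ereal n * Dp gradf g 1 x L1 = - (ereal 2 * (ereal (n * L1) * ?I1))"
    unfolding Dp_eq_prox_inf
    by (simp add: times_ereal.simps(1)[symmetric] ac_simps del: times_ereal.simps(1))
  ultimately show ?thesis
    unfolding Dp_eq_prox_inf n_def[symmetric] by (simp add: ereal_mult_left_mono)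
qed

lemma ereal_PL_transfer:
  fixes a b G :: ereal
  assumes "c > 0" and "ereal \<mu> * G \<le> ereal (1/2) * a" and "a \<le> ereal c * b"
  shows "ereal (\<mu> / c) * G \<le> ereal (1/2) * b"
proof -
  have "ereal c * (ereal (\<mu> / c) * G) = ereal \<mu> * G"
    using assms(1) by (simp add: mult.assoc[symmetric])
  also have "\<dots> \<le> ereal (1/2) * (ereal c * b)"
    using assms(2) ereal_mult_left_mono[OF assms(3), of "ereal (1/2)"] by simp
  also have "\<dots> = ereal c * (ereal (1/2) * b)"
    by (simp add: mult.left_commute)
  finally show ?thesis
    using assms(1) by (simp add: ereal_mult_le_mult_iff)
qed

theorem lemmaC1:
  fixes f :: "real ^ 'n \<Rightarrow> real"
    and gradf :: "real ^ 'n \<Rightarrow> real ^ 'n"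
    and g :: "real ^ 'n \<Rightarrow> ereal"
    and L1 L2 :: real
  assumes grad: "\<And>x. GDERIV f x :> gradf x"
    and proper: "proper_fun g"
    and convex: "convex_ereal g"
    and Fstar_fin: "(INF x. ereal (f x) + g x) > -\<infinity>"
    and L1pos: "L1 > 0" and L2pos: "L2 > 0"
    and L21: "L2 / real CARD('n) \<le> L1" and L12: "L1 \<le> L2"
  shows "(\<forall>mu2>0. (\<forall>x\<in>dom_e g. ereal (1/2) * Dp gradf g 2 x L2
                        \<ge> ereal mu2 * (ereal (f x) + g x - (INF z. ereal (f z) + g z)))
            \<longrightarrow> (\<forall>x\<in>dom_e g. ereal (1/2) * Dp gradf g 1 x L1
                        \<ge> ereal (mu2 / real CARD('n)) * (ereal (f x) + g x - (INF z. ereal (f z) + g z))))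
       \<and> (\<forall>mu1>0. (\<forall>x\<in>dom_e g. ereal (1/2) * Dp gradf g 1 x L1
                        \<ge> ereal mu1 * (ereal (f x) + g x - (INF z. ereal (f z) + g z)))
            \<longrightarrow> (\<forall>x\<in>dom_e g. ereal (1/2) * Dp gradf g 2 x L2
                        \<ge> ereal mu1 * (ereal (f x) + g x - (INF z. ereal (f z) + g z))))"
proof (intro conjI allI impI ballI)
  fix mu2 x
  assume "\<forall>x\<in>dom_e g. ereal (1/2) * Dp gradf g 2 x L2
            \<ge> ereal mu2 * (ereal (f x) + g x - (INF z. ereal (f z) + g z))"
    and x: "x \<in> dom_e g"
  then show "ereal (1/2) * Dp gradf g 1 x L1
      \<ge> ereal (mu2 / real CARD('n)) * (ereal (f x) + g x - (INF z. ereal (f z) + g z))"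
    using Dp_2_le_card_Dp_1[OF x proper convex L1pos L2pos L21]
    by (intro ereal_PL_transfer) auto
next
  fix mu1 x
  assume "\<forall>x\<in>dom_e g. ereal (1/2) * Dp gradf g 1 x L1
            \<ge> ereal mu1 * (ereal (f x) + g x - (INF z. ereal (f z) + g z))"
    and x: "x \<in> dom_e g"
  then show "ereal (1/2) * Dp gradf g 2 x L2
      \<ge> ereal mu1 * (ereal (f x) + g x - (INF z. ereal (f z) + g z))"
    using ereal_PL_transfer[of 1 mu1 _ "Dp gradf g 1 x L1" "Dp gradf g 2 x L2"]
      Dp_1_le_Dp_2[OF x proper convex L1pos L12]
    by auto
qed

end
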